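(* Under Conditions 1 and 2, there exist constants $C>0$ and $n_0\ge1$ such that for every $k\in\mathbb Z_+$, every $\mathbf y=(y_1,\dots,y_k)\in\mathbb R_+^k$ and every $n\ge n_0$, $$\sup_{t\ge0}R^{(n)}_\beta(t,k,\mathbf y)\le C\sum_{j=1}^k(1+y_j).$$
   Context: Notation: $\mathbb Z_+=\{1,2,\dots\}$, $\mathbb R_+=[0,\infty)$. For each $n\ge1$: $\lambda^{(n)}>0$; a probability $\Lambda^{(n)}$ on $\mathbb R_+$ with tail $\bar\Lambda^{(n)}(t)=\Lambda^{(n)}((t,\infty))$, $\eta^{(n)}=\int_0^\infty y\Lambda^{(n)}(dy)$, $\sigma^{(n)}=\frac12\int_0^\infty y^2\Lambda^{(n)}(dy)$ finite; probability laws $(p_k^{(n)})_{k\ge1}$, $(q_k^{(n)})_{k\ge1}$ on $\mathbb Z_+$ with generating functions $g^{(n)},h^{(n)}$, $m^{(n)}=\sum_kkp_k^{(n)}<\infty$; $\gamma_n>0$ with $\gamma_n\to\infty$, $\gamma_n/n\to\gamma_*\in[0,\infty)$. $\phi^{(n)}(z)=n\gamma_n[g^{(n)}(1-z/n)-(1-z/n)]$, $\psi^{(n)}(z)=\gamma_n[1-h^{(n)}(1-z/n)]$ for $z\in[0,n]$. Condition 1: (i) $\lambda^{(n)}\to\lambda>0$, $\eta^{(n)}\to\eta>0$, $\sigma^{(n)}\to\sigma>0$, $\gamma_n(1-\lambda^{(n)}\eta^{(n)})\to b\in\mathbb R$; (ii) $\psi^{(n)}\to\psi$ uniformly on compacts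 of $[0,\infty)$; (iii) $\{\phi^{(n)}\}$ is uniformly Lipschitz on bounded intervals and converges uniformly on compacts to a continuous $\phi$. Under Condition 1, $\lambda\eta=1$ and $m:=\lim_n\gamma_n(1-m^{(n)})$ exists (so $\gamma_n(1-\lambda^{(n)}\eta^{(n)}m^{(n)})\to b+m$). Condition 2 (for some $\alpha\in(1,2)$): (1) there are $C,k_0>0$ with $n\gamma_n\sum_{k\ge k_0}(k/n)^\alpha p^{(n)}_k+\sum_kk^\alpha q^{(n)}_k\le C$ for all $n$, and $\lim_{k_1\to\infty}\limsup_n\gamma_n\sum_{k\ge k_1}kp^{(n)}_k=0$; (2) there are $C_0>0$ and a probability $\Lambda^*$ on $\mathbb R_+$ with $\int t^{2\alpha}\Lambda^*(dt)<\infty$ and $\bar\Lambda^{(n)}\le C_0\bar\Lambda^*$ for all $n$. Fix $\beta\in[0,\infty)$ with $\beta>-(b+m)/(\sigma\lambda)$. Let $R^{(n)}$ be the unique locally integrable solution of $R^{(n)}(t)=\lambda^{(n)}m^{(n)}\bar\Lambda^{(n)}(t)+\lambda^{(n)}m^{(n)}\int_0^tR^{(n)}(t-s)\bar\Lambda^{(n)}(s)ds$, $t\ge0$, and $R^{(n)}_\beta(t)=e^{-\beta t/\gamma_n}R^{(n)}(t)$. For $k\in\mathbb Z_+$, $\mathbf y=(y_1,\dots,y_k)\in\mathbb R_+^k$: $R^{(n)}(t,k,\mathbf y)=\sum_{j=1}^k\big[\lambda^{(n)}\mathbf 1_{\{y_j>t\}}+\lambda^{(n)}\int_0^tR^{(n)}(t-s)\mathbf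 1_{\{y_j>s\}}ds\big]$ and $R^{(n)}_\beta(t,k,\mathbf y)=e^{-\beta t/\gamma_n}R^{(n)}(t,k,\mathbf y)$. *)

theory Defs
  imports "HOL-Probability.Probability"
begin

text \<open>Generating function of a law on the positive integers (given as a nat pmf with no mass at 0).\<close>
definition gf :: "nat pmf \<Rightarrow> real \<Rightarrow> real" where
  "gf p s = (\<Sum>k. pmf p k * s ^ k)"

definition pmean :: "nat pmf \<Rightarrow> real" where
  "pmean p = (\<Sum>k. real k * pmf p k)"

definition tail :: "real measure \<Rightarrow> real \<Rightarrow> real" where
  "tail L t = measure L {t<..}"

definition phin :: "real \<Rightarrow> nat pmf \<Rightarrow> nat \<Rightarrow> real \<Rightarrow> real" where
  "phin gam p n z = real n * gam * (gf p (1 - z / real n) - (1 - z / real n))"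

definition psin :: "real \<Rightarrow> nat pmf \<Rightarrow> nat \<Rightarrow> real \<Rightarrow> real" where
  "psin gam q n z = gam * (1 - gf q (1 - z / real n))"

definition prob_on_Rplus :: "real measure \<Rightarrow> bool" where
  "prob_on_Rplus L \<longleftrightarrow> prob_space L \<and> sets L = sets borel \<and> measure L {..<0} = 0"

definition renewal_solution :: "real \<Rightarrow> real measure \<Rightarrow> (real \<Rightarrow> real) \<Rightarrow> bool" where
  "renewal_solution c L R \<longleftrightarrow>
     (\<forall>T\<ge>0. set_integrable lborel {0..T} R) \<and>
     (\<forall>t\<ge>0. R t = c * tail L t + c * (LINT s:{0..t}|lborel. R (t - s) * tail L s))"

definition Rky :: "real \<Rightarrow> (real \<Rightarrow> real) \<Rightarrow> real \<Rightarrow> nat \<Rightarrow> (nat \<Rightarrow> real) \<Rightarrow> real" where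
  "Rky lam R t k y =
     (\<Sum>j=1..k. lam * indicator {t<..} (y j)
                + lam * (LINT s:{0..t}|lborel. R (t - s) * indicator {s<..} (y j)))"

end

theory Submission
  imports Defs
begin

text \<open>
  Fix n and put c = \<lambda>_n m_n and s = \<beta> / \<gamma>_n. The discounted function u(t) = exp(-s t) R_n(t)
  solves a renewal equation whose kernel c exp(-s x) \<Lambda>_n((x, \<infinity>)) is bounded by c. If the total
  mass of this kernel is at most 1, then u \<ge> 0 (its negative part satisfies a homogeneous Volterra
  inequality), and the integrated equation shows that u has integral at most 2 over every window
  of length h with c h \<le> 1/2. Since R_n(t, k, y) only integrates R_n over windows of lengths y_j,
  this gives the bound with a constant depending only on bounds for \<lambda>_n and c.

  By exp(-z) - 1 + z \<le> z^\<alpha> the total mass is at most c (\<eta>_n - s \<sigma>_n + s^\<alpha> E G(Y)) with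
  G(y) = \<integral>_0^y x^\<alpha> dx, and Condition 2 bounds E G(Y) uniformly in n via the tail domination by
  \<Lambda>*. Under Condition 1, \<gamma>_n times the defect 1 - c (\<eta>_n - s \<sigma>_n + s^\<alpha> B) tends to
  b + m + \<lambda> \<beta> \<sigma> > 0, so the mass is below 1 for all large n.
\<close>

section \<open>Integrals over intervals\<close>

lemma set_integrable_reflect_Icc:
  fixes f :: "real \<Rightarrow> real"
  assumes "set_integrable lborel {0..t} f"
  shows "set_integrable lborel {0..t} (\<lambda>s. f (t - s))"
proof -
  have "integrable lborel (\<lambda>x. indicator {0..t} x *\<^sub>R f x)"
    using assms by (simp add: set_integrable_def)
  from lborel_integrable_real_affine[OF this, of "-1" t]
  have "integrable lborel (\<lambda>x. indicator {0..t} (t + - 1 * x) *\<^sub>R f (t + - 1 * x))" by simp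
  moreover have "(\<lambda>x. indicator {0..t} (t + - 1 * x) *\<^sub>R f (t + - 1 * x))
      = (\<lambda>x. indicator {0..t} x *\<^sub>R f (t - x))"
    by (rule ext) (auto simp: indicator_def)
  ultimately show ?thesis unfolding set_integrable_def by simp
qed

lemma set_integral_reflect_Icc:
  fixes f :: "real \<Rightarrow> real"
  shows "(LINT s:{0..t}|lborel. f (t - s)) = (LINT x:{0..t}|lborel. f x)"
proof -
  have "(LINT x:{0..t}|lborel. f x)
      = \<bar>-1\<bar> *\<^sub>R (\<integral>x. indicator {0..t} (t + - 1 * x) *\<^sub>R f (t + - 1 * x) \<partial>lborel)"
    unfolding set_lebesgue_integral_def by (rule lborel_integral_real_affine) simp
  moreover have "(\<lambda>x. indicator {0..t} (t + - 1 * x) *\<^sub>R f (t + - 1 * x))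
      = (\<lambda>x. indicator {0..t} x *\<^sub>R f (t - x))"
    by (rule ext) (auto simp: indicator_def)
  ultimately show ?thesis unfolding set_lebesgue_integral_def by simp
qed

lemma set_integral_shift_Icc:
  fixes f :: "real \<Rightarrow> real"
  shows "(LINT t:{x..a}|lborel. f (t - x)) = (LINT r:{0..a-x}|lborel. f r)"
proof -
  have "(LINT r:{0..a-x}|lborel. f r)
      = \<bar>1\<bar> *\<^sub>R (\<integral>t. indicator {0..a-x} (- x + 1 * t) *\<^sub>R f (- x + 1 * t) \<partial>lborel)"
    unfolding set_lebesgue_integral_def by (rule lborel_integral_real_affine) simp
  moreover have "(\<lambda>t. indicator {0..a-x} (- x + 1 * t) *\<^sub>R f (- x + 1 * t))
      = (\<lambda>t. indicator {x..a} t *\<^sub>R f (t - x))"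
    by (rule ext) (auto simp: indicator_def)
  ultimately show ?thesis unfolding set_lebesgue_integral_def by simp
qed

lemma set_integrable_mult_bounded:
  fixes f g :: "real \<Rightarrow> real"
  assumes "set_integrable lborel A f" "g \<in> borel_measurable borel" "\<And>x. x \<in> A \<Longrightarrow> \<bar>g x\<bar> \<le> B"
  shows "set_integrable lborel A (\<lambda>x. f x * g x)"
proof (rule set_integrable_bound[of _ _ "\<lambda>x. B * f x"])
  show "set_integrable lborel A (\<lambda>x. B * f x)" using assms(1) by (rule set_integrable_mult_right)
  have "(\<lambda>x. indicator A x *\<^sub>R f x) \<in> borel_measurable lborel"
    using assms(1) unfolding set_integrable_def by (rule borel_measurable_integrable)
  then have "(\<lambda>x. (indicator A x *\<^sub>R f x) * g x) \<in> borel_measurable lborel"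
    using assms(2) by measurable
  then show "set_borel_measurable lborel A (\<lambda>x. f x * g x)"
    unfolding set_borel_measurable_def by (simp add: mult.assoc)
  show "AE x in lborel. x \<in> A \<longrightarrow> norm (f x * g x) \<le> norm (B * f x)"
  proof (rule AE_I2, rule impI)
    fix x assume "x \<in> A"
    then have "\<bar>g x\<bar> \<le> B" by (rule assms(3))
    then have "\<bar>f x\<bar> * \<bar>g x\<bar> \<le> \<bar>f x\<bar> * \<bar>B\<bar>" by (intro mult_left_mono) auto
    then show "norm (f x * g x) \<le> norm (B * f x)" by (simp add: abs_mult mult.commute)
  qed
qed

lemma set_integrable_const_Icc: "set_integrable lborel {a..b::real} (\<lambda>_. c::real)"
  using borel_integrable_atLeastAtMost'[of a b "\<lambda>_. c"] by simp

lemma set_integrable_bounded_Icc: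
  fixes g :: "real \<Rightarrow> real"
  assumes "g \<in> borel_measurable borel" "\<And>x. x \<in> {a..b} \<Longrightarrow> \<bar>g x\<bar> \<le> B"
  shows "set_integrable lborel {a..b} g"
  using set_integrable_mult_bounded[OF set_integrable_const_Icc[of a b 1] assms] by simp

lemma set_integrable_power_Icc: "set_integrable lborel {0..t} (\<lambda>x::real. x ^ j)"
  by (intro borel_integrable_atLeastAtMost') (intro continuous_intros)

lemma set_integral_power_Icc:
  assumes "0 \<le> t"
  shows "(LINT x:{0..t}|lborel. x ^ j) = t ^ Suc j / Suc j"
proof -
  have "integral\<^sup>L lborel (\<lambda>x. indicator {0 .. t} x *\<^sub>R x ^ j) = t ^ Suc j / Suc j - 0 ^ Suc j / Suc j"
  proof (rule integral_FTC_atLeastAtMost[OF assms])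
    fix x :: real
    have "((\<lambda>x. x ^ Suc j / Suc j) has_real_derivative x ^ j) (at x)"
      using DERIV_cdivide[OF DERIV_pow[of "Suc j" x], of "Suc j"] by simp
    then show "((\<lambda>x. x ^ Suc j / Suc j) has_vector_derivative x ^ j) (at x within {0..t})"
      by (simp add: has_real_derivative_iff_has_vector_derivative[symmetric] has_field_derivative_at_within)
  qed (intro continuous_intros)
  then show ?thesis by (simp add: set_lebesgue_integral_def)
qed

lemma set_integral_nonneg:
  fixes f :: "real \<Rightarrow> real"
  assumes "\<And>x. x \<in> A \<Longrightarrow> 0 \<le> f x"
  shows "0 \<le> (LINT x:A|M. f x)"
  unfolding set_lebesgue_integral_def
  by (rule Bochner_Integration.integral_nonneg) (auto simp: indicator_def assms)

lemma set_integral_mono_subset: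
  fixes f :: "real \<Rightarrow> real"
  assumes "set_integrable M B f" "A \<in> sets M" "A \<subseteq> B" "\<And>x. x \<in> B \<Longrightarrow> 0 \<le> f x"
  shows "(LINT x:A|M. f x) \<le> (LINT x:B|M. f x)"
proof -
  have "set_integrable M A f" by (rule set_integrable_subset[OF assms(1-3)])
  then show ?thesis
    using assms unfolding set_lebesgue_integral_def set_integrable_def
    by (intro integral_mono) (auto simp: indicator_def)
qed

lemma integrable_pair_measure_product:
  fixes f g :: "real \<Rightarrow> real"
  assumes "pair_sigma_finite M1 M2" "integrable M1 f" "integrable M2 g"
  shows "integrable (M1 \<Otimes>\<^sub>M M2) (\<lambda>(x,y). f x * g y)"
proof -
  interpret pair_sigma_finite M1 M2 by fact
  have [measurable]: "f \<in> borel_measurable M1" "g \<in> borel_measurable M2"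
    using assms by (auto intro: borel_measurable_integrable)
  show ?thesis
  proof (rule Fubini_integrable)
    show "(\<lambda>(x,y). f x * g y) \<in> borel_measurable (M1 \<Otimes>\<^sub>M M2)" by measurable
    have "integrable M1 (\<lambda>x. \<bar>f x\<bar> * (\<integral>y. \<bar>g y\<bar> \<partial>M2))"
      using assms(2) by (intro integrable_mult_left integrable_abs)
    then show "integrable M1 (\<lambda>x. \<integral>y. norm (case (x, y) of (x, y) \<Rightarrow> f x * g y) \<partial>M2)"
      by (simp add: abs_mult)
    show "AE x in M1. integrable M2 (\<lambda>y. case (x, y) of (x, y) \<Rightarrow> f x * g y)"
      using assms(3) by auto
  qed
qed

section \<open>Renewal equations with a kernel of mass at most one\<close>

lemma Volterra_iterate_bound:
  fixes N :: "real \<Rightarrow> real"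
  assumes int: "\<And>T. 0 \<le> T \<Longrightarrow> set_integrable lborel {0..T} N" and c: "0 \<le> c"
    and volterra: "\<And>x. 0 \<le> x \<Longrightarrow> N x \<le> c * (LINT y:{0..x}|lborel. N y)"
    and bound: "\<And>x. x \<in> {0..t} \<Longrightarrow> N x \<le> B"
  shows "\<forall>x\<in>{0..t}. N x \<le> B * (c * x) ^ j / fact j"
proof (induction j)
  case 0 then show ?case using bound by simp
next
  case (Suc j)
  show ?case
  proof
    fix x assume x: "x \<in> {0..t}"
    have "N x \<le> c * (LINT y:{0..x}|lborel. N y)" using x by (intro volterra) auto
    also have "(LINT y:{0..x}|lborel. N y) \<le> (LINT y:{0..x}|lborel. (B * c ^ j / fact j) * y ^ j)"
    proof (rule set_integral_mono)
      show "set_integrable lborel {0..x} N" using x by (intro int) auto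
      show "set_integrable lborel {0..x} (\<lambda>y. B * c ^ j / fact j * y ^ j)"
        by (intro set_integrable_mult_right set_integrable_power_Icc)
      fix y assume "y \<in> {0..x}"
      then have "N y \<le> B * (c * y) ^ j / fact j" using Suc.IH x by auto
      then show "N y \<le> B * c ^ j / fact j * y ^ j" by (simp add: power_mult_distrib field_simps)
    qed
    also have "\<dots> = B * c ^ j / fact j * (x ^ Suc j / Suc j)"
      using x by (simp add: set_integral_power_Icc)
    finally have "N x \<le> c * (B * c ^ j / fact j * (x ^ Suc j / Suc j))"
      using c by (simp add: mult_left_mono)
    also have "\<dots> = B * (c * x) ^ Suc j / fact (Suc j)"
      by (simp add: power_mult_distrib field_simps)
    finally show "N x \<le> B * (c * x) ^ Suc j / fact (Suc j)" .
  qed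
qed

lemma Volterra_inequality_imp_zero:
  fixes N :: "real \<Rightarrow> real"
  assumes int: "\<And>T. 0 \<le> T \<Longrightarrow> set_integrable lborel {0..T} N" and c: "0 \<le> c"
    and nonneg: "\<And>x. 0 \<le> N x"
    and volterra: "\<And>x. 0 \<le> x \<Longrightarrow> N x \<le> c * (LINT y:{0..x}|lborel. N y)"
    and t: "0 \<le> t"
  shows "N t = 0"
proof (rule ccontr)
  assume "N t \<noteq> 0"
  then have pos: "0 < N t" using nonneg[of t] by linarith
  define B where "B = c * (LINT x:{0..t}|lborel. N x)"
  have B_bound: "N x \<le> B" if "x \<in> {0..t}" for x
  proof -
    have "N x \<le> c * (LINT y:{0..x}|lborel. N y)" using that by (intro volterra) auto
    also have "\<dots> \<le> B" unfolding B_def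
      using that nonneg by (intro mult_left_mono c set_integral_mono_subset[OF int[OF t]]) auto
    finally show ?thesis .
  qed
  have iter: "\<forall>x\<in>{0..t}. N x \<le> B * (c * x) ^ j / fact j" for j
    by (rule Volterra_iterate_bound[OF int c volterra B_bound])
  have "(\<lambda>j. B * (inverse (fact j) * (c * t) ^ j)) \<longlonglongrightarrow> B * 0"
    by (intro tendsto_mult tendsto_const summable_LIMSEQ_zero summable_exp)
  then have "eventually (\<lambda>j. B * (inverse (fact j) * (c * t) ^ j) < N t) sequentially"
    using pos by (intro order_tendstoD(2)) auto
  then obtain j where "B * (inverse (fact j) * (c * t) ^ j) < N t"
    by (auto simp: eventually_sequentially)
  moreover have "N t \<le> B * (c * t) ^ j / fact j" using iter[of j] t by auto
  ultimately show False by (simp add: field_simps)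
qed

locale renewal_equation =
  fixes K u :: "real \<Rightarrow> real" and c :: real
  assumes kernel_measurable: "K \<in> borel_measurable borel"
    and kernel_nonneg: "\<And>t. 0 \<le> K t" and kernel_le: "\<And>t. K t \<le> c"
    and kernel_mass_le_1: "\<And>r. (LINT x:{0..r}|lborel. K x) \<le> 1"
    and solution_integrable: "\<And>T. 0 \<le> T \<Longrightarrow> set_integrable lborel {0..T} u"
    and solution_eq: "\<And>t. 0 \<le> t \<Longrightarrow> u t = K t + (LINT s:{0..t}|lborel. u (t - s) * K s)"
begin

lemma bound_nonneg: "0 \<le> c"
  using kernel_nonneg[of 0] kernel_le[of 0] by linarith

lemma kernel_integrable: "set_integrable lborel {a..b} K"
  by (rule set_integrable_bounded_Icc[OF kernel_measurable, where B=c])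
     (use kernel_nonneg kernel_le in \<open>auto simp: abs_of_nonneg\<close>)

lemma set_integrable_convolution:
  fixes f :: "real \<Rightarrow> real"
  assumes "set_integrable lborel {0..t} f"
  shows "set_integrable lborel {0..t} (\<lambda>s. f (t - s) * K s)"
  by (rule set_integrable_mult_bounded[OF set_integrable_reflect_Icc[OF assms] kernel_measurable,
        where B=c])
     (use kernel_nonneg kernel_le in \<open>auto simp: abs_of_nonneg\<close>)

lemma solution_measurable: "0 \<le> a \<Longrightarrow> (\<lambda>x. indicator {0..a} x * u x) \<in> borel_measurable lborel"
  using solution_integrable unfolding set_integrable_def by (auto dest: borel_measurable_integrable)

lemma negative_part_integrable:
  assumes T: "0 \<le> T" shows "set_integrable lborel {0..T} (\<lambda>x. max 0 (- u x))"
proof (rule set_integrable_bound[OF solution_integrable[OF T]])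
  have "(\<lambda>x. max 0 (- (indicator {0..T} x * u x))) \<in> borel_measurable lborel"
    using solution_measurable[OF T] by measurable
  moreover have "(\<lambda>x. max 0 (- (indicator {0..T} x * u x))) = (\<lambda>x. indicator {0..T} x * max 0 (- u x))"
    by (rule ext) (auto simp: indicator_def)
  ultimately show "set_borel_measurable lborel {0..T} (\<lambda>x. max 0 (- u x))"
    unfolding set_borel_measurable_def by simp
  show "AE x in lborel. x \<in> {0..T} \<longrightarrow> norm (max 0 (- u x)) \<le> norm (u x)"
    by (rule AE_I2) auto
qed

lemma negative_part_Volterra:
  assumes t: "0 \<le> t"
  shows "max 0 (- u t) \<le> c * (LINT x:{0..t}|lborel. max 0 (- u x))"
proof -
  define N where "N x = max 0 (- u x)" for x
  have N_int: "set_integrable lborel {0..t} N"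
    unfolding N_def by (rule negative_part_integrable[OF t])
  have iN: "set_integrable lborel {0..t} (\<lambda>s. N (t - s) * K s)"
    by (rule set_integrable_convolution[OF N_int])
  have iu: "set_integrable lborel {0..t} (\<lambda>s. u (t - s) * K s)"
    by (rule set_integrable_convolution[OF solution_integrable[OF t]])
  have "0 \<le> (LINT s:{0..t}|lborel. N (t - s) * K s + u (t - s) * K s)"
    by (rule set_integral_nonneg)
       (simp add: distrib_right[symmetric] N_def kernel_nonneg)
  also have "\<dots> = (LINT s:{0..t}|lborel. N (t - s) * K s) + (LINT s:{0..t}|lborel. u (t - s) * K s)"
    by (rule set_integral_add(2)[OF iN iu])
  finally have "- u t \<le> (LINT s:{0..t}|lborel. N (t - s) * K s)"
    using solution_eq[OF t] kernel_nonneg[of t] by linarith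
  also have "\<dots> \<le> (LINT s:{0..t}|lborel. c * N (t - s))"
    by (rule set_integral_mono[OF iN set_integrable_mult_right[OF set_integrable_reflect_Icc[OF N_int]]])
       (auto simp: N_def mult.commute intro!: mult_right_mono kernel_le)
  also have "\<dots> = c * (LINT x:{0..t}|lborel. N x)"
    by (simp add: set_integral_reflect_Icc)
  finally show ?thesis
    using bound_nonneg by (simp add: N_def set_integral_nonneg)
qed

lemma solution_nonneg:
  assumes "0 \<le> t" shows "0 \<le> u t"
proof -
  have "max 0 (- u t) = 0"
    by (rule Volterra_inequality_imp_zero[OF negative_part_integrable bound_nonneg _ negative_part_Volterra assms])
       auto
  then show ?thesis by (simp add: max_def split: if_splits)
qed

definition kernel_mass :: "real \<Rightarrow> real" where
  "kernel_mass r = (LINT x:{0..r}|lborel. K x)"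

lemma kernel_mass_nonneg: "0 \<le> kernel_mass r"
  unfolding kernel_mass_def by (rule set_integral_nonneg) (simp add: kernel_nonneg)

lemma kernel_mass_le: "kernel_mass r \<le> 1"
  unfolding kernel_mass_def by (rule kernel_mass_le_1)

lemma kernel_mass_le_linear:
  assumes "0 \<le> r" shows "kernel_mass r \<le> c * r"
proof -
  have "kernel_mass r \<le> (LINT x:{0..r}|lborel. c)"
    unfolding kernel_mass_def
    by (rule set_integral_mono[OF kernel_integrable set_integrable_const_Icc]) (simp add: kernel_le)
  also have "\<dots> = c * r" using assms by (simp add: set_integral_const)
  finally show ?thesis .
qed

lemma kernel_mass_mono: "mono kernel_mass"
proof
  fix r r' :: real assume "r \<le> r'"
  show "kernel_mass r \<le> kernel_mass r'"
  proof (cases "r < 0")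
    case True then show ?thesis
      using kernel_mass_nonneg[of r'] by (simp add: kernel_mass_def set_lebesgue_integral_def)
  next
    case False
    then show ?thesis unfolding kernel_mass_def using \<open>r \<le> r'\<close>
      by (intro set_integral_mono_subset[OF kernel_integrable]) (auto simp: kernel_nonneg)
  qed
qed

lemma kernel_mass_measurable[measurable]: "kernel_mass \<in> borel_measurable borel"
  using kernel_mass_mono by (rule borel_measurable_mono)


lemma convolution_pair_integrable:
  assumes a: "0 \<le> a"
  shows "integrable (lborel \<Otimes>\<^sub>M lborel)
    (\<lambda>(x, t). (indicator {0..a} x * u x) * (indicator {0..a} t * indicator {..t} x * K (t - x)))"
    (is "integrable _ (\<lambda>(x, t). ?G x t)")
proof (rule Bochner_Integration.integrable_bound)
  have Psf: "pair_sigma_finite lborel lborel"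
    by (intro pair_sigma_finite.intro) (rule lborel.sigma_finite_measure_axioms)+
  show "integrable (lborel \<Otimes>\<^sub>M lborel)
      (\<lambda>(x, t). (indicator {0..a} x * u x) * (c * indicator {0..a} t))"
  proof (rule integrable_pair_measure_product[OF Psf])
    show "integrable lborel (\<lambda>x. indicator {0..a} x * u x)"
      using solution_integrable[OF a] by (simp add: set_integrable_def)
    show "integrable lborel (\<lambda>t. c * indicator {0..a} t)"
      using set_integrable_const_Icc[of 0 a c] by (simp add: set_integrable_def mult.commute)
  qed
  note kernel_measurable[measurable]
  have "(\<lambda>p. indicator {0..a} (fst p) * u (fst p)) \<in> borel_measurable (lborel \<Otimes>\<^sub>M lborel)"
    by (rule measurable_fst''[OF solution_measurable[OF a]])
  moreover have "(\<lambda>p. indicator {0..a} (snd p) * (if fst p \<le> snd p then 1 else 0) * K (snd p - fst p))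
      \<in> borel_measurable (lborel \<Otimes>\<^sub>M lborel)"
    by measurable
  ultimately have "(\<lambda>p. (indicator {0..a} (fst p) * u (fst p)) *
      (indicator {0..a} (snd p) * (if fst p \<le> snd p then 1 else 0) * K (snd p - fst p)))
      \<in> borel_measurable (lborel \<Otimes>\<^sub>M lborel)"
    by (rule borel_measurable_times)
  moreover have "(\<lambda>(x, t). ?G x t) = (\<lambda>p. (indicator {0..a} (fst p) * u (fst p)) *
      (indicator {0..a} (snd p) * (if fst p \<le> snd p then 1 else 0) * K (snd p - fst p)))"
    by (rule ext) (auto simp: indicator_def)
  ultimately show "(\<lambda>(x, t). ?G x t) \<in> borel_measurable (lborel \<Otimes>\<^sub>M lborel)" by simp
  show "AE p in lborel \<Otimes>\<^sub>M lborel. norm ((\<lambda>(x, t). ?G x t) p)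
      \<le> norm ((\<lambda>(x, t). (indicator {0..a} x * u x) * (c * indicator {0..a} t)) p)"
  proof (rule AE_I2, clarify)
    fix x t :: real
    have "\<bar>indicator {0..a} t * indicator {..t} x * K (t - x)\<bar> \<le> \<bar>c * indicator {0..a} t\<bar>"
      using kernel_nonneg[of "t - x"] kernel_le[of "t - x"] bound_nonneg by (auto simp: indicator_def)
    then show "norm (?G x t) \<le> norm (indicator {0..a} x * u x * (c * indicator {0..a} t))"
      by (simp add: abs_mult mult_left_mono)
  qed
qed

text \<open>Integrate the renewal equation over \<open>[0, a]\<close> and exchange the order of integration
  in the convolution term.\<close>

lemma integrated_renewal_eq:
  assumes a: "0 \<le> a"
  shows "(LINT x:{0..a}|lborel. u x) = kernel_mass a + (LINT s:{0..a}|lborel. u s * kernel_mass (a - s))"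
proof -
  define conv where "conv t = (LINT s:{0..t}|lborel. u (t - s) * K s)" for t
  define G where "G x t = (indicator {0..a} x * u x) * (indicator {0..a} t * indicator {..t} x * K (t - x))"
    for x t :: real
  have conv_int: "set_integrable lborel {0..a} conv"
  proof -
    have "set_integrable lborel {0..a} (\<lambda>t. u t - K t)"
      using solution_integrable[OF a] kernel_integrable by (rule set_integral_diff(1))
    moreover have "set_integrable lborel {0..a} (\<lambda>t. u t - K t) = set_integrable lborel {0..a} conv"
      by (rule set_integrable_cong) (auto simp: conv_def solution_eq)
    ultimately show ?thesis by simp
  qed
  have "(LINT x:{0..a}|lborel. u x) = (LINT t:{0..a}|lborel. K t + conv t)"
    by (rule set_lebesgue_integral_cong) (auto simp: conv_def solution_eq)
  also have "\<dots> = kernel_mass a + (LINT t:{0..a}|lborel. conv t)"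
    using set_integral_add(2)[OF kernel_integrable conv_int] by (simp add: kernel_mass_def)
  also have "(LINT t:{0..a}|lborel. conv t) = (\<integral>t. (\<integral>x. G x t \<partial>lborel) \<partial>lborel)"
    unfolding set_lebesgue_integral_def
  proof (rule Bochner_Integration.integral_cong[OF refl])
    fix t
    have "conv t = (LINT x:{0..t}|lborel. u x * K (t - x))"
      unfolding conv_def using set_integral_reflect_Icc[where f="\<lambda>x. u x * K (t - x)" and t=t] by simp
    then show "indicator {0..a} t *\<^sub>R conv t = (\<integral>x. G x t \<partial>lborel)"
      unfolding set_lebesgue_integral_def G_def
      by (cases "t \<in> {0..a}") (simp_all, auto intro!: Bochner_Integration.integral_cong simp: indicator_def)
  qed
  also have "\<dots> = (\<integral>x. (\<integral>t. G x t \<partial>lborel) \<partial>lborel)"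
    by (rule pair_sigma_finite.Fubini_integral
        [OF pair_sigma_finite.intro[OF lborel.sigma_finite_measure_axioms lborel.sigma_finite_measure_axioms]])
       (use convolution_pair_integrable[OF a] in \<open>simp add: G_def\<close>)
  also have "\<dots> = (LINT x:{0..a}|lborel. u x * kernel_mass (a - x))"
    unfolding set_lebesgue_integral_def
  proof (rule Bochner_Integration.integral_cong[OF refl])
    fix x
    show "(\<integral>t. G x t \<partial>lborel) = indicator {0..a} x *\<^sub>R (u x * kernel_mass (a - x))"
    proof (cases "x \<in> {0..a}")
      case True
      have "kernel_mass (a - x) = (LINT t:{x..a}|lborel. K (t - x))"
        unfolding kernel_mass_def by (rule set_integral_shift_Icc[symmetric])
      also have "\<dots> = (\<integral>t. indicator {0..a} t * indicator {..t} x * K (t - x) \<partial>lborel)"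
        unfolding set_lebesgue_integral_def
        by (intro Bochner_Integration.integral_cong) (use True in \<open>auto simp: indicator_def\<close>)
      finally show ?thesis using True unfolding G_def by simp
    qed (simp add: G_def)
  qed
  finally show ?thesis .
qed

lemma set_integrable_solution_kernel_mass:
  assumes "0 \<le> b" "A \<subseteq> {0..b}" "A \<in> sets lborel"
  shows "set_integrable lborel A (\<lambda>s. u s * kernel_mass (d - s))"
proof -
  have "set_integrable lborel {0..b} (\<lambda>s. u s * kernel_mass (d - s))"
    by (rule set_integrable_mult_bounded[OF solution_integrable[OF assms(1)], where B=1])
       (auto simp: kernel_mass_nonneg kernel_mass_le abs_of_nonneg)
  then show ?thesis by (rule set_integrable_subset[OF _ assms(3,2)])
qed

text \<open>In the integrated equation at \<open>a + h\<close> the part of the convolution coming from \<open>[0, a]\<close>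
  is at most the integral of \<open>u\<close> over \<open>[0, a]\<close>, and the rest is at most \<open>c h W\<close>, where \<open>W\<close>
  is the integral of \<open>u\<close> over \<open>(a, a + h]\<close>; hence \<open>W \<le> 1 + c h W\<close>.\<close>

lemma set_integral_window_le:
  assumes a: "0 \<le> a" and h: "0 \<le> h" and ch: "c * h \<le> 1/2"
  shows "(LINT x:{a<..a+h}|lborel. u x) \<le> 2"
proof -
  define W where "W = (LINT x:{a<..a+h}|lborel. u x)"
  have iW: "set_integrable lborel {a<..a+h} u"
    by (rule set_integrable_subset[OF solution_integrable[of "a+h"]]) (use a h in auto)
  have ia: "set_integrable lborel {0..a} u" by (rule solution_integrable[OF a])
  have un: "{0..a+h} = {0..a} \<union> {a<..a+h}" using a h by auto
  have split: "(LINT x:{0..a+h}|lborel. u x) = (LINT x:{0..a}|lborel. u x) + W"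
    unfolding W_def un by (rule set_integral_Un[OF _ ia iW]) auto
  define A1 where "A1 = (LINT s:{0..a}|lborel. u s * kernel_mass (a + h - s))"
  define A2 where "A2 = (LINT s:{a<..a+h}|lborel. u s * kernel_mass (a + h - s))"
  have "(LINT s:{0..a+h}|lborel. u s * kernel_mass (a + h - s)) = A1 + A2"
    unfolding A1_def A2_def un
    by (rule set_integral_Un) (use a h in \<open>auto intro!: set_integrable_solution_kernel_mass[of "a+h"]\<close>)
  then have eq_ah: "(LINT x:{0..a+h}|lborel. u x) = kernel_mass (a+h) + A1 + A2"
    using integrated_renewal_eq[of "a+h"] a h by simp
  have A1_le: "A1 \<le> (LINT x:{0..a}|lborel. u x)"
    unfolding A1_def
    by (rule set_integral_mono[OF set_integrable_solution_kernel_mass[OF a] ia])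
       (auto intro!: mult_left_le solution_nonneg kernel_mass_le)
  have A2_le: "A2 \<le> (LINT x:{a<..a+h}|lborel. (c * h) * u x)"
    unfolding A2_def
  proof (rule set_integral_mono[OF set_integrable_solution_kernel_mass[of "a+h"]])
    show "set_integrable lborel {a<..a+h} (\<lambda>x. c * h * u x)"
      using iW by (rule set_integrable_mult_right)
    fix s assume s: "s \<in> {a<..a+h}"
    then have "kernel_mass (a + h - s) \<le> c * (a + h - s)" by (intro kernel_mass_le_linear) auto
    also have "\<dots> \<le> c * h" using s bound_nonneg by (intro mult_left_mono) auto
    finally have "u s * kernel_mass (a + h - s) \<le> u s * (c * h)"
      using s a by (intro mult_left_mono solution_nonneg) auto
    then show "u s * kernel_mass (a + h - s) \<le> c * h * u s" by (simp add: mult.commute)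
  qed (use a h in auto)
  have "0 \<le> W" unfolding W_def by (rule set_integral_nonneg) (use a in \<open>auto intro: solution_nonneg\<close>)
  have "W \<le> 1 + c * h * W"
    using split eq_ah A1_le A2_le kernel_mass_le[of "a+h"] unfolding W_def by simp
  also have "\<dots> \<le> 1 + W / 2"
    using mult_right_mono[OF ch \<open>0 \<le> W\<close>] by simp
  finally show ?thesis unfolding W_def by simp
qed

lemma set_integral_windows_le:
  assumes a: "0 \<le> a" and h: "0 \<le> h" and ch: "c * h \<le> 1/2"
  shows "(LINT x:{a<..a + real M * h}|lborel. u x) \<le> 2 * real M"
proof (induction M)
  case 0 then show ?case by (simp add: set_lebesgue_integral_def)
next
  case (Suc M)
  define p where "p = a + real M * h"
  have ap: "a \<le> p" unfolding p_def using h by simp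
  have un: "{a<..p + h} = {a<..p} \<union> {p<..p + h}" using ap h by auto
  have int: "set_integrable lborel {0..p + h} u" using a h ap by (intro solution_integrable) simp
  have "(LINT x:{a<..p + h}|lborel. u x) = (LINT x:{a<..p}|lborel. u x) + (LINT x:{p<..p + h}|lborel. u x)"
    unfolding un by (rule set_integral_Un) (use a h ap in \<open>auto intro!: set_integrable_subset[OF int]\<close>)
  also have "\<dots> \<le> 2 * real M + 2"
    using Suc.IH set_integral_window_le[of p h] a h ch ap unfolding p_def by (simp add: add_mono)
  finally show ?case unfolding p_def by (simp add: algebra_simps)
qed

lemma set_integral_window_indicator_le:
  assumes t: "0 \<le> t" and y: "0 \<le> y" and h: "0 < h" and ch: "c * h \<le> 1/2"
  shows "(LINT x:{0..t}|lborel. u x * indicator {t - y<..} x) \<le> 2 * (y / h + 1)"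
proof -
  define a where "a = max 0 (t - y)"
  define M where "M = nat \<lceil>y / h\<rceil>"
  define b where "b = a + real M * h"
  have a: "0 \<le> a" by (simp add: a_def)
  have "y / h \<le> real M" unfolding M_def by linarith
  then have Mh: "y \<le> real M * h" using h by (simp add: field_simps)
  have M_le: "real M \<le> y / h + 1"
    unfolding M_def using y h by (simp add: of_nat_nat)
  have tb: "t \<le> b" unfolding b_def a_def using Mh by auto
  have ib: "set_integrable lborel {a..b} u"
    by (rule set_integrable_subset[OF solution_integrable[of b]]) (use a tb t in auto)
  have "(LINT x:{0..t}|lborel. u x * indicator {t - y<..} x) \<le> (LINT x:{a..b}|lborel. u x)"
    unfolding set_lebesgue_integral_def
  proof (rule integral_mono)
    have "set_integrable lborel {0..t} (\<lambda>x. u x * indicator {t - y<..} x)"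
      by (rule set_integrable_mult_bounded[OF solution_integrable[OF t], where B=1]) auto
    then show "integrable lborel (\<lambda>x. indicator {0..t} x *\<^sub>R (u x * indicator {t - y<..} x))"
      by (simp add: set_integrable_def)
    show "integrable lborel (\<lambda>x. indicator {a..b} x *\<^sub>R u x)"
      using ib by (simp add: set_integrable_def)
    fix x
    show "indicator {0..t} x *\<^sub>R (u x * indicator {t - y<..} x) \<le> indicator {a..b} x *\<^sub>R u x"
      using tb a solution_nonneg[of x] by (auto simp: indicator_def a_def)
  qed
  also have "(LINT x:{a..b}|lborel. u x) = (LINT x:{a<..b}|lborel. u x)"
  proof (rule set_integral_cong_set)
    have "set_integrable lborel {a<..b} u" by (rule set_integrable_subset[OF ib]) auto
    with ib show "set_borel_measurable lborel {a..b} u" "set_borel_measurable lborel {a<..b} u"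
      by (auto simp: set_integrable_def set_borel_measurable_def dest: borel_measurable_integrable)
    show "AE x in lborel. x \<in> {a<..b} \<longleftrightarrow> x \<in> {a..b}"
      using AE_lborel_singleton[of a] by (rule eventually_mono) auto
  qed
  also have "\<dots> \<le> 2 * real M" unfolding b_def by (rule set_integral_windows_le[OF a less_imp_le[OF h] ch])
  also have "\<dots> \<le> 2 * (y / h + 1)" using M_le by simp
  finally show ?thesis .
qed

end

section \<open>Tails and moments of laws on the half-line\<close>

lemma tail_eq_integral_indicator:
  assumes L: "prob_on_Rplus L"
  shows "tail L x = (\<integral>y. indicator {x<..} y \<partial>L)"
proof -
  interpret prob_space L using L by (simp add: prob_on_Rplus_def)
  have "space L = UNIV"
    using L sets_eq_imp_space_eq[of L borel] by (simp add: prob_on_Rplus_def)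
  then show ?thesis by (simp add: tail_def)
qed

lemma tail_nonneg: "0 \<le> tail L x"
  by (simp add: tail_def)

lemma tail_le_1:
  assumes "prob_on_Rplus L" shows "tail L x \<le> 1"
proof -
  interpret prob_space L using assms by (simp add: prob_on_Rplus_def)
  show ?thesis by (simp add: tail_def)
qed

lemma tail_antimono:
  assumes L: "prob_on_Rplus L" and "x \<le> x'"
  shows "tail L x' \<le> tail L x"
proof -
  interpret prob_space L using L by (simp add: prob_on_Rplus_def)
  show ?thesis unfolding tail_def
    by (rule finite_measure_mono) (use assms in \<open>auto simp: prob_on_Rplus_def\<close>)
qed

lemma tail_measurable:
  assumes L: "prob_on_Rplus L"
  shows "tail L \<in> borel_measurable borel"
proof -
  have "mono (\<lambda>x. - tail L x)" using tail_antimono[OF L] by (auto simp: mono_def)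
  then have "(\<lambda>x. - tail L x) \<in> borel_measurable borel" by (rule borel_measurable_mono)
  then have "(\<lambda>x. - (- tail L x)) \<in> borel_measurable borel" by measurable
  then show ?thesis by simp
qed

lemma AE_nonneg_prob_on_Rplus:
  assumes L: "prob_on_Rplus L" shows "AE y in L. 0 \<le> y"
proof (rule AE_I[where N="{..<0}"])
  interpret prob_space L using L by (simp add: prob_on_Rplus_def)
  show "{..<0::real} \<in> sets L" using L by (simp add: prob_on_Rplus_def)
  then show "emeasure L {..<0::real} = 0" using L by (simp add: prob_on_Rplus_def emeasure_eq_measure)
qed auto

lemma indicator_greaterThan_swap: "(indicator {x<..} y :: real) = indicator {..<y} x"
  by (simp add: indicator_def)

lemma set_integral_mult_tail:
  fixes f :: "real \<Rightarrow> real"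
  assumes L: "prob_on_Rplus L" and f[measurable]: "f \<in> borel_measurable borel"
    and bound: "\<And>x. x \<in> {0..r} \<Longrightarrow> \<bar>f x\<bar> \<le> B"
  shows "(LINT x:{0..r}|lborel. f x * tail L x)
           = (\<integral>y. (LINT x:{0..r}|lborel. f x * indicator {x<..} y) \<partial>L)"
    and "integrable L (\<lambda>y. (LINT x:{0..r}|lborel. f x * indicator {x<..} y))"
proof -
  interpret L: prob_space L using L by (simp add: prob_on_Rplus_def)
  have [measurable_cong]: "sets L = sets borel" using L by (simp add: prob_on_Rplus_def)
  have Psf: "pair_sigma_finite lborel L"
    by (intro pair_sigma_finite.intro lborel.sigma_finite_measure_axioms L.sigma_finite_measure_axioms)
  define H where "H x y = indicator {0..r} x * f x * indicator {x<..} y" for x y :: real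
  have fi: "integrable lborel (\<lambda>x. indicator {0..r} x * f x)"
    using set_integrable_bounded_Icc[OF f bound] by (simp add: set_integrable_def)
  have H_int: "integrable (lborel \<Otimes>\<^sub>M L) (\<lambda>(x, y). H x y)"
  proof (rule Bochner_Integration.integrable_bound)
    show "integrable (lborel \<Otimes>\<^sub>M L) (\<lambda>(x, y). (indicator {0..r} x * f x) * (\<lambda>_. 1) y)"
      by (rule integrable_pair_measure_product[OF Psf fi]) simp
    have "(\<lambda>p. indicator {0..r} (fst p) * f (fst p) * (if fst p < snd p then 1 else 0))
        \<in> borel_measurable (lborel \<Otimes>\<^sub>M L)"
      by measurable
    moreover have "(\<lambda>(x, y). H x y)
        = (\<lambda>p. indicator {0..r} (fst p) * f (fst p) * (if fst p < snd p then 1 else 0))"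
      by (rule ext) (auto simp: H_def indicator_def)
    ultimately show "(\<lambda>(x, y). H x y) \<in> borel_measurable (lborel \<Otimes>\<^sub>M L)" by simp
  qed (auto simp: H_def indicator_def)
  have "(LINT x:{0..r}|lborel. f x * tail L x) = (\<integral>x. (\<integral>y. H x y \<partial>L) \<partial>lborel)"
    unfolding set_lebesgue_integral_def H_def tail_eq_integral_indicator[OF L]
    by (intro Bochner_Integration.integral_cong refl) (simp add: mult.assoc)
  also have "\<dots> = (\<integral>y. (\<integral>x. H x y \<partial>lborel) \<partial>L)"
    by (rule pair_sigma_finite.Fubini_integral[OF Psf, symmetric]) (use H_int in simp)
  finally show "(LINT x:{0..r}|lborel. f x * tail L x)
      = (\<integral>y. (LINT x:{0..r}|lborel. f x * indicator {x<..} y) \<partial>L)"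
    unfolding set_lebesgue_integral_def H_def by (simp add: mult.assoc)
  have "integrable L (\<lambda>y. \<integral>x. H x y \<partial>lborel)"
    by (rule pair_sigma_finite.integrable_snd[OF Psf]) (use H_int in simp)
  then show "integrable L (\<lambda>y. (LINT x:{0..r}|lborel. f x * indicator {x<..} y))"
    unfolding set_lebesgue_integral_def H_def by (simp add: mult.assoc)
qed

definition powr_integral :: "real \<Rightarrow> real \<Rightarrow> real" where
  "powr_integral a y = (LINT x:{0..y}|lborel. x powr a)"

lemma set_integrable_powr_Icc:
  assumes "0 \<le> a" shows "set_integrable lborel {0..y} (\<lambda>x::real. x powr a)"
  by (rule set_integrable_bounded_Icc[where B="y powr a"]) (use assms in \<open>auto intro: powr_mono2\<close>)

lemma powr_integral_nonneg: "0 \<le> powr_integral a y"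
  unfolding powr_integral_def by (rule set_integral_nonneg) simp

lemma powr_integral_mono:
  assumes "0 \<le> a" shows "mono (powr_integral a)"
proof
  fix y y' :: real assume "y \<le> y'"
  show "powr_integral a y \<le> powr_integral a y'"
  proof (cases "y < 0")
    case True then show ?thesis
      using powr_integral_nonneg[of a y'] by (simp add: powr_integral_def set_lebesgue_integral_def)
  next
    case False then show ?thesis unfolding powr_integral_def using \<open>y \<le> y'\<close>
      by (intro set_integral_mono_subset[OF set_integrable_powr_Icc[OF assms]]) auto
  qed
qed

lemma powr_integral_measurable[measurable]:
  "0 \<le> a \<Longrightarrow> powr_integral a \<in> borel_measurable borel"
  by (rule borel_measurable_mono[OF powr_integral_mono])

lemma powr_integral_le:
  assumes a: "0 \<le> a" and y: "0 \<le> y" shows "powr_integral a y \<le> y powr (a + 1)"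
proof -
  have "powr_integral a y \<le> (LINT x:{0..y}|lborel. y powr a)"
    unfolding powr_integral_def
    by (rule set_integral_mono[OF set_integrable_powr_Icc[OF a] set_integrable_const_Icc])
       (use a in \<open>auto intro: powr_mono2\<close>)
  also have "\<dots> = y powr (a + 1)" using y by (simp add: set_integral_const powr_add)
  finally show ?thesis .
qed

lemma powr_le_1_plus_powr:
  assumes y: "0 \<le> (y::real)" and "p \<le> q" "0 \<le> p"
  shows "y powr p \<le> 1 + y powr q"
proof (cases "y \<le> 1")
  case True
  then have "y powr p \<le> 1 powr p" using y assms(3) by (intro powr_mono2) auto
  then show ?thesis by (smt (verit) powr_ge_zero powr_one_eq_one)
next
  case False
  then show ?thesis using assms powr_mono[of p q y] by (smt (verit) powr_ge_zero)
qed

lemma truncated_powr_integral_le: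
  assumes a: "0 \<le> a" and y: "0 \<le> y"
  shows "(LINT x:{0..r}|lborel. x powr a * indicator {x<..} y) \<le> powr_integral a y"
  unfolding powr_integral_def set_lebesgue_integral_def
proof (rule integral_mono)
  show "integrable lborel (\<lambda>x. indicator {0..r} x *\<^sub>R (x powr a * indicator {x<..} y))"
    using set_integrable_mult_bounded[OF set_integrable_powr_Icc[OF a, of r],
        where g="indicator {..<y}" and B=1]
    by (auto simp: set_integrable_def indicator_greaterThan_swap)
  show "integrable lborel (\<lambda>x. indicator {0..y} x *\<^sub>R x powr a)"
    using set_integrable_powr_Icc[OF a, of y] by (simp add: set_integrable_def)
qed (auto simp: indicator_def)

lemma truncated_powr_integral_eq:
  assumes y: "0 \<le> y" and r: "y \<le> r"
  shows "(LINT x:{0..r}|lborel. x powr a * indicator {x<..} y) = powr_integral a y"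
  unfolding powr_integral_def set_lebesgue_integral_def
  by (rule integral_cong_AE)
     (use AE_lborel_singleton[of y] y r in \<open>auto elim!: eventually_mono simp: indicator_def\<close>)

text \<open>By Fubini, E G(Y) = \<integral>_0^\<infinity> x^a P(Y > x) dx for G = powr_integral a, so a domination of
  tails transfers to these integrals.\<close>

lemma truncated_moment_le:
  assumes Lq: "prob_on_Rplus Lq" and Lt: "prob_on_Rplus Lt" and a: "1 \<le> a"
    and C0: "0 \<le> C0" and dom: "\<And>t. 0 \<le> t \<Longrightarrow> tail Lq t \<le> C0 * tail Lt t"
    and intS: "integrable Lt (\<lambda>t. t powr (2 * a))"
  shows "(\<integral>y. (LINT x:{0..r}|lborel. x powr a * indicator {x<..} y) \<partial>Lq)
           \<le> C0 * (\<integral>y. 1 + y powr (2 * a) \<partial>Lt)"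
proof -
  have a0: "0 \<le> a" using a by simp
  interpret Lt: prob_space Lt using Lt by (simp add: prob_on_Rplus_def)
  have bound: "\<And>x. x \<in> {0..r} \<Longrightarrow> \<bar>x powr a\<bar> \<le> r powr a"
    using a by (auto intro: powr_mono2)
  note fubini = set_integral_mult_tail[OF _ _ bound]
  have tail_int: "set_integrable lborel {0..r} (\<lambda>x. x powr a * tail L x)" if "prob_on_Rplus L" for L
    by (rule set_integrable_mult_bounded[OF set_integrable_powr_Icc[OF a0] tail_measurable[OF that],
          where B=1])
       (use tail_le_1[OF that] in \<open>auto simp: tail_nonneg\<close>)
  have "(\<integral>y. (LINT x:{0..r}|lborel. x powr a * indicator {x<..} y) \<partial>Lq)
      = (LINT x:{0..r}|lborel. x powr a * tail Lq x)"
    by (rule fubini(1)[OF Lq, symmetric]) measurable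
  also have "\<dots> \<le> (LINT x:{0..r}|lborel. C0 * (x powr a * tail Lt x))"
  proof (rule set_integral_mono[OF tail_int[OF Lq] set_integrable_mult_right[OF tail_int[OF Lt]]])
    fix x assume "x \<in> {0..r}"
    then have "x powr a * tail Lq x \<le> x powr a * (C0 * tail Lt x)" by (intro mult_left_mono dom) auto
    then show "x powr a * tail Lq x \<le> C0 * (x powr a * tail Lt x)" by (simp add: mult_ac)
  qed
  also have "\<dots> = C0 * (\<integral>y. (LINT x:{0..r}|lborel. x powr a * indicator {x<..} y) \<partial>Lt)"
    using fubini(1)[OF Lt] by simp
  also have "\<dots> \<le> C0 * (\<integral>y. 1 + y powr (2 * a) \<partial>Lt)"
  proof (rule mult_left_mono[OF integral_mono_AE C0])
    show "integrable Lt (\<lambda>y. LINT x:{0..r}|lborel. x powr a * indicator {x<..} y)"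
      by (rule fubini(2)[OF Lt]) measurable
    show "integrable Lt (\<lambda>y. 1 + y powr (2 * a))"
      using intS by simp
    show "AE y in Lt. (LINT x:{0..r}|lborel. x powr a * indicator {x<..} y) \<le> 1 + y powr (2 * a)"
      using AE_nonneg_prob_on_Rplus[OF Lt]
    proof (rule eventually_mono)
      fix y :: real assume y: "0 \<le> y"
      have "(LINT x:{0..r}|lborel. x powr a * indicator {x<..} y) \<le> powr_integral a y"
        by (rule truncated_powr_integral_le[OF a0 y])
      also have "\<dots> \<le> y powr (a + 1)" by (rule powr_integral_le[OF a0 y])
      also have "\<dots> \<le> 1 + y powr (2 * a)" by (rule powr_le_1_plus_powr) (use y a in auto)
      finally show "(LINT x:{0..r}|lborel. x powr a * indicator {x<..} y) \<le> 1 + y powr (2 * a)" .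
    qed
  qed
  finally show ?thesis .
qed

lemma powr_integral_moment_le:
  assumes Lq: "prob_on_Rplus Lq" and Lt: "prob_on_Rplus Lt" and a: "1 \<le> a"
    and C0: "0 \<le> C0" and dom: "\<And>t. 0 \<le> t \<Longrightarrow> tail Lq t \<le> C0 * tail Lt t"
    and intS: "integrable Lt (\<lambda>t. t powr (2 * a))"
  shows "integrable Lq (powr_integral a)"
    and "(\<integral>y. powr_integral a y \<partial>Lq) \<le> C0 * (\<integral>y. 1 + y powr (2 * a) \<partial>Lt)"
proof -
  have a0: "0 \<le> a" using a by simp
  interpret Lq: prob_space Lq using Lq by (simp add: prob_on_Rplus_def)
  have [measurable_cong]: "sets Lq = sets borel" using Lq by (simp add: prob_on_Rplus_def)
  define I where "I k y = (LINT x:{0..real k}|lborel. x powr a * indicator {x<..} y)" for k :: nat and y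
  have I_int: "integrable Lq (I k)" for k
    unfolding I_def
    by (rule set_integral_mult_tail(2)[OF Lq _, where B="real k powr a"]) (use a in \<open>auto intro: powr_mono2\<close>)
  have I_mono: "I k y \<le> I k' y" if "k \<le> k'" for k k' y
  proof -
    have "set_integrable lborel {0..real k'} (\<lambda>x. x powr a * indicator {x<..} y)"
      using set_integrable_mult_bounded[OF set_integrable_powr_Icc[OF a0, of "real k'"],
          where g="indicator {..<y}" and B=1]
      by (simp add: indicator_greaterThan_swap)
    then show ?thesis unfolding I_def
      by (rule set_integral_mono_subset) (use that in \<open>auto simp: indicator_def\<close>)
  qed
  have bound: "(\<integral>y. I k y \<partial>Lq) \<le> C0 * (\<integral>y. 1 + y powr (2 * a) \<partial>Lt)" for k
    unfolding I_def by (rule truncated_moment_le[OF Lq Lt a C0 dom intS])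
  have "incseq (\<lambda>k. \<integral>y. I k y \<partial>Lq)"
    by (rule incseq_SucI, rule integral_mono[OF I_int I_int]) (rule I_mono, simp)
  from incseq_convergent[OF this, of "C0 * (\<integral>y. 1 + y powr (2 * a) \<partial>Lt)"] bound
  obtain l where l: "(\<lambda>k. \<integral>y. I k y \<partial>Lq) \<longlonglongrightarrow> l"
    by blast
  have mono: "AE y in Lq. mono (\<lambda>k. I k y)" by (rule AE_I2) (auto intro: monoI I_mono)
  have lim: "AE y in Lq. (\<lambda>k. I k y) \<longlonglongrightarrow> powr_integral a y"
    using AE_nonneg_prob_on_Rplus[OF Lq]
  proof (rule eventually_mono)
    fix y :: real assume y: "0 \<le> y"
    obtain N :: nat where N: "y \<le> real N" using real_arch_simple by blast
    have "eventually (\<lambda>k. I k y = powr_integral a y) sequentially"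
      unfolding eventually_sequentially I_def
      by (rule exI[of _ N]) (use N y in \<open>auto intro!: truncated_powr_integral_eq\<close>)
    then show "(\<lambda>k. I k y) \<longlonglongrightarrow> powr_integral a y" by (rule tendsto_eventually)
  qed
  have meas: "powr_integral a \<in> borel_measurable Lq" using a0 by measurable
  show "integrable Lq (powr_integral a)"
    by (rule integrable_monotone_convergence[OF I_int mono lim l meas])
  have "(\<integral>y. powr_integral a y \<partial>Lq) = l"
    by (rule integral_monotone_convergence[OF I_int mono lim l meas])
  also have "l \<le> C0 * (\<integral>y. 1 + y powr (2 * a) \<partial>Lt)"
    by (rule LIMSEQ_le_const2[OF l]) (use bound in auto)
  finally show "(\<integral>y. powr_integral a y \<partial>Lq) \<le> C0 * (\<integral>y. 1 + y powr (2 * a) \<partial>Lt)" .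
qed

section \<open>A Laplace-type bound for the tail\<close>

lemma exp_neg_le_quadratic:
  fixes z :: real assumes "0 \<le> z" shows "exp (- z) \<le> 1 - z + z\<^sup>2 / 2"
proof -
  let ?g = "\<lambda>x::real. 1 - x + x\<^sup>2 / 2 - exp (- x)"
  have "?g 0 \<le> ?g z"
  proof (rule DERIV_nonneg_imp_nondecreasing[OF assms])
    fix x :: real assume "0 \<le> x" "x \<le> z"
    have "(?g has_real_derivative (- 1 + x + exp (- x))) (at x)"
      by (auto intro!: derivative_eq_intros simp: power2_eq_square)
    moreover have "0 \<le> - 1 + x + exp (- x)" using exp_ge_add_one_self[of "- x"] by linarith
    ultimately show "\<exists>y. (?g has_real_derivative y) (at x) \<and> 0 \<le> y" by blast
  qed
  then show ?thesis by simp
qed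

lemma exp_neg_sub_one_add_le_powr:
  fixes z a :: real
  assumes z: "0 \<le> z" and a: "1 \<le> a" "a \<le> 2"
  shows "exp (- z) - 1 + z \<le> z powr a"
proof (cases "z \<le> 1")
  case True
  have "exp (- z) - 1 + z \<le> z\<^sup>2 / 2" using exp_neg_le_quadratic[OF z] by simp
  also have "\<dots> \<le> z powr 2" using z by (simp add: powr_numeral)
  also have "\<dots> \<le> z powr a" using powr_mono'[OF a(2) z True] .
  finally show ?thesis .
next
  case False
  have "exp (- z) - 1 + z \<le> z" using z by simp
  also have "\<dots> \<le> z powr a" using False a powr_mono[of 1 a z] z by simp
  finally show ?thesis .
qed

lemma set_integral_exp_le:
  fixes s y :: real assumes y: "0 \<le> y" and s: "0 \<le> s" and a: "1 \<le> a" "a \<le> 2"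
  shows "(LINT x:{0..y}|lborel. exp (- s * x)) \<le> y - s * ((1/2) * y^2) + s powr a * powr_integral a y"
proof -
  have ie: "set_integrable lborel {0..y} (\<lambda>x. exp (- s * x))"
    by (intro borel_integrable_atLeastAtMost') (intro continuous_intros)
  have i1: "set_integrable lborel {0..y} (\<lambda>x. 1::real)" by (rule set_integrable_const_Icc)
  have ix: "set_integrable lborel {0..y} (\<lambda>x. s * x)"
    using set_integrable_power_Icc[of y 1] by (intro set_integrable_mult_right) simp
  have ih: "set_integrable lborel {0..y} (\<lambda>x. exp (- s * x) - 1 + s * x)"
    using ie i1 ix by (intro set_integral_add(1) set_integral_diff(1))
  have "(LINT x:{0..y}|lborel. exp (- s * x) - 1 + s * x)
      = (LINT x:{0..y}|lborel. exp (- s * x)) - (LINT x:{0..y}|lborel. 1) + (LINT x:{0..y}|lborel. s * x)"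
    using ie i1 ix by (simp add: set_integral_add(2) set_integral_diff(1,2))
  moreover have "(LINT x:{0..y}|lborel. 1::real) = y" using y by (simp add: set_integral_const)
  moreover have "(LINT x:{0..y}|lborel. s * x) = s * ((1/2) * y^2)"
    using set_integral_power_Icc[OF y, of 1] by (simp add: power2_eq_square)
  moreover have "(LINT x:{0..y}|lborel. exp (- s * x) - 1 + s * x) \<le> (LINT x:{0..y}|lborel. s powr a * x powr a)"
  proof (rule set_integral_mono[OF ih])
    show "set_integrable lborel {0..y} (\<lambda>x. s powr a * x powr a)"
      using set_integrable_powr_Icc[of a y] a by (intro set_integrable_mult_right) simp
    fix x assume x: "x \<in> {0..y}"
    have "exp (- (s * x)) - 1 + s * x \<le> (s * x) powr a"
      by (rule exp_neg_sub_one_add_le_powr) (use x s a in auto)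
    then show "exp (- s * x) - 1 + s * x \<le> s powr a * x powr a"
      using x s by (simp add: powr_mult)
  qed
  moreover have "(LINT x:{0..y}|lborel. s powr a * x powr a) = s powr a * powr_integral a y"
    by (simp add: powr_integral_def)
  ultimately show ?thesis by linarith
qed

lemma set_integral_exp_tail_le:
  assumes L: "prob_on_Rplus L" and s: "0 \<le> s" and a: "1 \<le> a" "a \<le> 2"
    and int1: "integrable L (\<lambda>y. y)" and int2: "integrable L (\<lambda>y. y^2)"
    and Lt: "prob_on_Rplus Lt" and C0: "0 \<le> C0" and dom: "\<And>t. 0 \<le> t \<Longrightarrow> tail L t \<le> C0 * tail Lt t"
    and Lt_int: "integrable Lt (\<lambda>t. t powr (2 * a))"
  shows "(LINT x:{0..r}|lborel. exp (- s * x) * tail L x)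
           \<le> (\<integral>y. y \<partial>L) - s * ((1/2) * (\<integral>y. y^2 \<partial>L)) + s powr a * (C0 * (\<integral>y. 1 + y powr (2 * a) \<partial>Lt))"
proof -
  note moments = powr_integral_moment_le[OF L Lt a(1) C0 dom Lt_int]
  note intG = moments(1)
  have bound: "\<And>x. x \<in> {0..r} \<Longrightarrow> \<bar>exp (- s * x)\<bar> \<le> 1" using s by auto
  have meas: "(\<lambda>x. exp (- s * x)) \<in> borel_measurable borel" by measurable
  note fubini = set_integral_mult_tail[OF L meas bound]
  have "(LINT x:{0..r}|lborel. exp (- s * x) * tail L x)
      = (\<integral>y. (LINT x:{0..r}|lborel. exp (- s * x) * indicator {x<..} y) \<partial>L)"
    by (rule fubini(1))
  also have "\<dots> \<le> (\<integral>y. y - s * ((1/2) * y^2) + s powr a * powr_integral a y \<partial>L)"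
  proof (rule integral_mono_AE[OF fubini(2)])
    show "integrable L (\<lambda>y. y - s * ((1/2) * y^2) + s powr a * powr_integral a y)"
      using int1 int2 intG by simp
    show "AE y in L. (LINT x:{0..r}|lborel. exp (- s * x) * indicator {x<..} y)
        \<le> y - s * ((1/2) * y^2) + s powr a * powr_integral a y"
      using AE_nonneg_prob_on_Rplus[OF L]
    proof (rule eventually_mono)
      fix y :: real assume y: "0 \<le> y"
      have "(LINT x:{0..r}|lborel. exp (- s * x) * indicator {x<..} y) \<le> (LINT x:{0..y}|lborel. exp (- s * x))"
        unfolding set_lebesgue_integral_def
      proof (rule integral_mono)
        show "integrable lborel (\<lambda>x. indicator {0..r} x *\<^sub>R (exp (- s * x) * indicator {x<..} y))"
          using set_integrable_mult_bounded[OF set_integrable_bounded_Icc[OF meas bound],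
              where g="indicator {..<y}" and B=1]
          by (simp add: set_integrable_def indicator_greaterThan_swap)
        show "integrable lborel (\<lambda>x. indicator {0..y} x *\<^sub>R exp (- s * x))"
          using set_integrable_bounded_Icc[OF meas, of 0 y 1] s by (simp add: set_integrable_def)
      qed (auto simp: indicator_def)
      also have "\<dots> \<le> y - s * ((1/2) * y^2) + s powr a * powr_integral a y"
        by (rule set_integral_exp_le[OF y s a])
      finally show "(LINT x:{0..r}|lborel. exp (- s * x) * indicator {x<..} y)
          \<le> y - s * ((1/2) * y^2) + s powr a * powr_integral a y" .
    qed
  qed
  also have "\<dots> = (\<integral>y. y \<partial>L) - s * ((1/2) * (\<integral>y. y^2 \<partial>L)) + s powr a * (\<integral>y. powr_integral a y \<partial>L)"
    using int1 int2 intG by simp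
  also have "\<dots> \<le> (\<integral>y. y \<partial>L) - s * ((1/2) * (\<integral>y. y^2 \<partial>L)) + s powr a * (C0 * (\<integral>y. 1 + y powr (2 * a) \<partial>Lt))"
    using moments(2) by (simp add: mult_left_mono)
  finally show ?thesis .
qed

section \<open>Discounted renewal solutions\<close>

lemma renewal_equation_discounted:
  assumes c: "0 \<le> c" and L: "prob_on_Rplus L" and s: "0 \<le> s"
    and R: "renewal_solution c L R"
    and mass: "\<And>r. 0 \<le> r \<Longrightarrow> c * (LINT x:{0..r}|lborel. exp (- s * x) * tail L x) \<le> 1"
  shows "renewal_equation (\<lambda>x. c * exp (- s * max 0 x) * tail L x) (\<lambda>x. exp (- s * x) * R x) c"
proof
  show "(\<lambda>x. c * exp (- s * max 0 x) * tail L x) \<in> borel_measurable borel"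
    using tail_measurable[OF L] by measurable
  fix x :: real
  show "0 \<le> c * exp (- s * max 0 x) * tail L x" using c by (simp add: tail_nonneg)
  have "exp (- s * max 0 x) * tail L x \<le> 1 * 1"
    using s tail_le_1[OF L] by (intro mult_mono) (auto simp: tail_nonneg)
  then show "c * exp (- s * max 0 x) * tail L x \<le> c"
    using c by (simp add: mult.assoc mult_left_le)
next
  fix r :: real
  show "(LINT x:{0..r}|lborel. c * exp (- s * max 0 x) * tail L x) \<le> 1"
  proof (cases "r < 0")
    case False
    have "(LINT x:{0..r}|lborel. c * exp (- s * max 0 x) * tail L x)
        = c * (LINT x:{0..r}|lborel. exp (- s * x) * tail L x)"
      by (subst set_integral_mult_right[symmetric], rule set_lebesgue_integral_cong) auto
    also have "\<dots> \<le> 1" using False by (intro mass) simp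
    finally show ?thesis .
  qed (simp add: set_lebesgue_integral_def)
next
  fix T :: real assume T: "0 \<le> T"
  have "set_integrable lborel {0..T} (\<lambda>x. R x * exp (- s * x))"
    by (rule set_integrable_mult_bounded[where B=1]) (use R T s in \<open>auto simp: renewal_solution_def\<close>)
  then show "set_integrable lborel {0..T} (\<lambda>x. exp (- s * x) * R x)"
    by (simp add: mult.commute)
next
  fix t :: real assume t: "0 \<le> t"
  have "(LINT r:{0..t}|lborel. exp (- s * (t - r)) * R (t - r) * (c * exp (- s * max 0 r) * tail L r))
      = (LINT r:{0..t}|lborel. (c * exp (- s * t)) * (R (t - r) * tail L r))"
  proof (rule set_lebesgue_integral_cong)
    show "\<forall>r. r \<in> {0..t} \<longrightarrow> exp (- s * (t - r)) * R (t - r) * (c * exp (- s * max 0 r) * tail L r)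
        = (c * exp (- s * t)) * (R (t - r) * tail L r)"
    proof (intro allI impI)
      fix r assume r: "r \<in> {0..t}"
      have "exp (- s * (t - r)) * exp (- s * r) = exp (- s * t)"
        by (simp add: exp_add[symmetric] algebra_simps)
      then show "exp (- s * (t - r)) * R (t - r) * (c * exp (- s * max 0 r) * tail L r)
          = (c * exp (- s * t)) * (R (t - r) * tail L r)"
        using r by (simp add: algebra_simps)
    qed
  qed simp
  also have "\<dots> = c * exp (- s * t) * (LINT r:{0..t}|lborel. R (t - r) * tail L r)"
    by simp
  finally have conv: "(LINT r:{0..t}|lborel. exp (- s * (t - r)) * R (t - r) * (c * exp (- s * max 0 r) * tail L r))
      = c * exp (- s * t) * (LINT r:{0..t}|lborel. R (t - r) * tail L r)" .
  have "R t = c * tail L t + c * (LINT r:{0..t}|lborel. R (t - r) * tail L r)"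
    using R t by (simp add: renewal_solution_def)
  then show "exp (- s * t) * R t = c * exp (- s * max 0 t) * tail L t
      + (LINT r:{0..t}|lborel. exp (- s * (t - r)) * R (t - r) * (c * exp (- s * max 0 r) * tail L r))"
    unfolding conv using t by (simp add: algebra_simps)
qed

lemma discounted_window_integral_le:
  assumes renewal: "renewal_equation K (\<lambda>x. exp (- s * x) * R x) c"
    and s: "0 \<le> s" and t: "0 \<le> t" and y: "0 \<le> y" and h: "0 < h" and ch: "c * h \<le> 1/2"
  shows "exp (- s * t) * (LINT r:{0..t}|lborel. R (t - r) * indicator {r<..} y) \<le> 2 * (y / h + 1)"
proof -
  interpret renewal_equation K "\<lambda>x. exp (- s * x) * R x" c by (rule renewal)
  have "set_integrable lborel {0..t} (\<lambda>x. exp (- s * x) * R x * exp (s * x))"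
    by (rule set_integrable_mult_bounded[OF solution_integrable[OF t], where B="exp (s * t)"])
       (use s in \<open>auto intro: mult_left_mono\<close>)
  moreover have "(\<lambda>x. exp (- s * x) * R x * exp (s * x)) = R"
    by (rule ext) (simp add: exp_minus field_simps)
  ultimately have R_int: "set_integrable lborel {0..t} R" by simp
  have "(LINT r:{0..t}|lborel. R (t - r) * indicator {r<..} y)
      = (LINT r:{0..t}|lborel. (\<lambda>x. R x * indicator {t - y<..} x) (t - r))"
    by (rule set_lebesgue_integral_cong) (auto simp: indicator_def)
  also have "\<dots> = (LINT x:{0..t}|lborel. R x * indicator {t - y<..} x)"
    by (rule set_integral_reflect_Icc)
  finally have "exp (- s * t) * (LINT r:{0..t}|lborel. R (t - r) * indicator {r<..} y)
      = (LINT x:{0..t}|lborel. exp (- s * t) * (R x * indicator {t - y<..} x))"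
    by simp
  also have "\<dots> \<le> (LINT x:{0..t}|lborel. exp (- s * x) * R x * indicator {t - y<..} x)"
  proof (rule set_integral_mono)
    show "set_integrable lborel {0..t} (\<lambda>x. exp (- s * t) * (R x * indicator {t - y<..} x))"
      using set_integrable_mult_bounded[OF R_int, where B=1] by auto
    show "set_integrable lborel {0..t} (\<lambda>x. exp (- s * x) * R x * indicator {t - y<..} x)"
      using set_integrable_mult_bounded[OF solution_integrable[OF t], where B=1] by auto
    fix x assume x: "x \<in> {0..t}"
    then have "0 \<le> R x" using solution_nonneg[of x] by (simp add: zero_le_mult_iff)
    moreover have "exp (- s * t) \<le> exp (- s * x)" using x s by (simp add: mult_left_mono)
    ultimately show "exp (- s * t) * (R x * indicator {t - y<..} x) \<le> exp (- s * x) * R x * indicator {t - y<..} x"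
      by (auto simp: indicator_def mult_right_mono)
  qed
  also have "\<dots> \<le> 2 * (y / h + 1)" by (rule set_integral_window_indicator_le[OF t y h ch])
  finally show ?thesis .
qed

lemma Rky_discounted_le:
  fixes R :: "real \<Rightarrow> real" and y :: "nat \<Rightarrow> real"
  assumes lam: "0 < lam" "lam \<le> A" and c: "0 \<le> c" "c \<le> A"
    and L: "prob_on_Rplus L" and s: "0 \<le> s" and R: "renewal_solution c L R"
    and mass: "\<And>r. 0 \<le> r \<Longrightarrow> c * (LINT x:{0..r}|lborel. exp (- s * x) * tail L x) \<le> 1"
    and t: "0 \<le> t" and y: "\<forall>j\<in>{1..k}. 0 \<le> y j"
  shows "exp (- s * t) * Rky lam R t k y \<le> A * (3 + 4 * A) * (\<Sum>j=1..k. 1 + y j)"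
proof -
  have A: "0 < A" using lam by simp
  define h where "h = 1 / (2 * A)"
  have h: "0 < h" "c * h \<le> 1/2" using A c by (auto simp: h_def field_simps)
  note renewal = renewal_equation_discounted[OF c(1) L s R mass]
  have "exp (- s * t) * (lam * indicator {t<..} (y j) + lam * (LINT r:{0..t}|lborel. R (t - r) * indicator {r<..} (y j)))
      \<le> A * (3 + 4 * A) * (1 + y j)" if j: "j \<in> {1..k}" for j
  proof -
    have yj: "0 \<le> y j" using y j by auto
    have "exp (- s * t) * (lam * indicator {t<..} (y j) + lam * (LINT r:{0..t}|lborel. R (t - r) * indicator {r<..} (y j)))
        = lam * (exp (- s * t) * indicator {t<..} (y j))
          + lam * (exp (- s * t) * (LINT r:{0..t}|lborel. R (t - r) * indicator {r<..} (y j)))"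
      by (simp add: algebra_simps)
    also have "\<dots> \<le> lam * 1 + lam * (2 * (y j / h + 1))"
      using lam(1) s t discounted_window_integral_le[OF renewal s t yj h]
      by (intro add_mono mult_left_mono) (auto simp: indicator_def)
    also have "\<dots> = lam * (3 + 4 * A * y j)" by (simp add: h_def algebra_simps)
    also have "\<dots> \<le> A * (3 + 4 * A * y j)" using lam A yj by (intro mult_right_mono) auto
    also have "\<dots> \<le> A * (3 + 4 * A) * (1 + y j)" using A yj by (simp add: algebra_simps)
    finally show ?thesis .
  qed
  then have "exp (- s * t) * Rky lam R t k y \<le> (\<Sum>j=1..k. A * (3 + 4 * A) * (1 + y j))"
    unfolding Rky_def sum_distrib_left by (rule sum_mono)
  then show ?thesis by (simp add: sum_distrib_left)
qed

lemma Rky_discounted_le_of_moments: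
  fixes R :: "real \<Rightarrow> real" and y :: "nat \<Rightarrow> real"
  assumes lam: "0 < lam" "lam \<le> A" and c: "0 \<le> c" "c \<le> A"
    and L: "prob_on_Rplus L" and L_int: "integrable L (\<lambda>y. y)" "integrable L (\<lambda>y. y^2)"
    and Lt: "prob_on_Rplus Lt" and C0: "0 \<le> C0" and dom: "\<And>t. 0 \<le> t \<Longrightarrow> tail L t \<le> C0 * tail Lt t"
    and Lt_int: "integrable Lt (\<lambda>t. t powr (2 * a))" and a: "1 \<le> a" "a \<le> 2" and s: "0 \<le> s"
    and defect: "c * ((\<integral>y. y \<partial>L) - s * ((1/2) * (\<integral>y. y^2 \<partial>L))
      + s powr a * (C0 * (\<integral>y. 1 + y powr (2 * a) \<partial>Lt))) \<le> 1"
    and R: "renewal_solution c L R" and t: "0 \<le> t" and y: "\<forall>j\<in>{1..k}. 0 \<le> y j"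
  shows "exp (- s * t) * Rky lam R t k y \<le> A * (3 + 4 * A) * (\<Sum>j=1..k. 1 + y j)"
proof (rule Rky_discounted_le[OF lam c L s R _ t y])
  fix r :: real
  have "c * (LINT x:{0..r}|lborel. exp (- s * x) * tail L x) \<le> c * ((\<integral>y. y \<partial>L)
      - s * ((1/2) * (\<integral>y. y^2 \<partial>L)) + s powr a * (C0 * (\<integral>y. 1 + y powr (2 * a) \<partial>Lt)))"
    by (rule mult_left_mono[OF set_integral_exp_tail_le[OF L s a L_int Lt C0 dom Lt_int] c(1)])
  with defect show "c * (LINT x:{0..r}|lborel. exp (- s * x) * tail L x) \<le> 1" by linarith
qed

section \<open>Asymptotics and the main estimate\<close>

lemma tendsto_one_of_scaled_defect:
  fixes g x :: "nat \<Rightarrow> real"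
  assumes g: "filterlim g at_top sequentially" and lim: "(\<lambda>n. g n * (1 - x n)) \<longlonglongrightarrow> l"
  shows "x \<longlonglongrightarrow> 1"
proof -
  have "(\<lambda>n. 1 - g n * (1 - x n) * inverse (g n)) \<longlonglongrightarrow> 1 - l * 0"
    by (intro tendsto_intros lim tendsto_inverse_0_at_top[OF g])
  moreover have "eventually (\<lambda>n. 0 < g n) sequentially"
    using g by (simp add: filterlim_at_top_dense)
  then have "eventually (\<lambda>n. 1 - g n * (1 - x n) * inverse (g n) = x n) sequentially"
    by (rule eventually_mono) (simp add: field_simps)
  ultimately show ?thesis by (simp add: Lim_transform_eventually)
qed

text \<open>With s_n = \<beta> / \<gamma>_n one has \<gamma>_n s_n^\<alpha> = \<beta>^\<alpha> \<gamma>_n^(1 - \<alpha>) \<rightarrow> 0, so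
  \<gamma>_n (1 - \<lambda>_n m_n (\<eta>_n - s_n \<sigma>_n + s_n^\<alpha> B)) \<rightarrow> b + m + \<lambda> \<beta> \<sigma> > 0.\<close>

lemma eventually_discounted_mass_lt_1:
  fixes gam lam eta sig pm :: "nat \<Rightarrow> real"
  assumes gam: "filterlim gam at_top sequentially"
    and b: "(\<lambda>n. gam n * (1 - lam n * eta n)) \<longlonglongrightarrow> b"
    and m: "(\<lambda>n. gam n * (1 - pm n)) \<longlonglongrightarrow> m"
    and lam: "lam \<longlonglongrightarrow> lam0" and sig: "sig \<longlonglongrightarrow> sig0"
    and alpha: "1 < alpha" and beta: "0 \<le> beta" and pos: "0 < b + m + lam0 * beta * sig0"
  shows "eventually (\<lambda>n. lam n * pm n * (eta n - beta / gam n * sig n + (beta / gam n) powr alpha * B) < 1)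
           sequentially"
proof -
  define D where "D n = gam n * (1 - lam n * eta n) + lam n * eta n * (gam n * (1 - pm n))
      + lam n * pm n * beta * sig n - lam n * pm n * (beta powr alpha * gam n powr (1 - alpha)) * B" for n
  have "(\<lambda>n. gam n powr (1 - alpha)) \<longlonglongrightarrow> 0"
    by (rule tendsto_neg_powr[OF _ gam]) (use alpha in simp)
  then have "D \<longlonglongrightarrow> b + 1 * m + lam0 * 1 * beta * sig0 - lam0 * 1 * (beta powr alpha * 0) * B"
    unfolding D_def
    by (intro tendsto_intros b m lam sig tendsto_one_of_scaled_defect[OF gam b]
        tendsto_one_of_scaled_defect[OF gam m])
  then have "eventually (\<lambda>n. 0 < D n) sequentially"
    using pos by (intro order_tendstoD(1)) auto
  moreover have "eventually (\<lambda>n. 0 < gam n) sequentially"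
    using gam by (simp add: filterlim_at_top_dense)
  ultimately show ?thesis
  proof eventually_elim
    case (elim n)
    have "gam n * (beta / gam n) powr alpha = beta powr alpha * gam n powr (1 - alpha)"
      using elim beta by (simp add: powr_divide powr_diff)
    then have "gam n * (1 - lam n * pm n * (eta n - beta / gam n * sig n + (beta / gam n) powr alpha * B)) = D n"
      using elim unfolding D_def by (simp add: algebra_simps)
    then show ?case using elim by (smt (verit) mult_le_0_iff)
  qed
qed

theorem lemma5p5:
  fixes lam :: "nat \<Rightarrow> real" and Lam :: "nat \<Rightarrow> real measure"
    and p q :: "nat \<Rightarrow> nat pmf" and gam :: "nat \<Rightarrow> real"
    and gstar lam0 eta0 sig0 b m alpha beta :: real
    and psi phi :: "real \<Rightarrow> real"
    and R :: "nat \<Rightarrow> real \<Rightarrow> real"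
  defines "eta \<equiv> \<lambda>n. integral\<^sup>L (Lam n) (\<lambda>y. y)"
      and "sig \<equiv> \<lambda>n. (1/2) * integral\<^sup>L (Lam n) (\<lambda>y. y^2)"
  \<comment> \<open>standing assumptions\<close>
  assumes lam_pos: "\<And>n. n \<ge> 1 \<Longrightarrow> lam n > 0"
    and Lam_prob: "\<And>n. n \<ge> 1 \<Longrightarrow> prob_on_Rplus (Lam n)"
    and Lam_mom1: "\<And>n. n \<ge> 1 \<Longrightarrow> integrable (Lam n) (\<lambda>y. y)"
    and Lam_mom2: "\<And>n. n \<ge> 1 \<Longrightarrow> integrable (Lam n) (\<lambda>y. y^2)"
    and p_pos: "\<And>n. n \<ge> 1 \<Longrightarrow> pmf (p n) 0 = 0"
    and q_pos: "\<And>n. n \<ge> 1 \<Longrightarrow> pmf (q n) 0 = 0"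
    and p_mean: "\<And>n. n \<ge> 1 \<Longrightarrow> summable (\<lambda>k. real k * pmf (p n) k)"
    and gam_pos: "\<And>n. n \<ge> 1 \<Longrightarrow> gam n > 0"
    and gam_inf: "filterlim gam at_top sequentially"
    and gam_lim: "(\<lambda>n. gam n / real n) \<longlonglongrightarrow> gstar" and gstar_nonneg: "gstar \<ge> 0"
  \<comment> \<open>Condition 1 (i)\<close>
    and C1_lam: "lam \<longlonglongrightarrow> lam0" "lam0 > 0"
    and C1_eta: "eta \<longlonglongrightarrow> eta0" "eta0 > 0"
    and C1_sig: "sig \<longlonglongrightarrow> sig0" "sig0 > 0"
    and C1_b: "(\<lambda>n. gam n * (1 - lam n * eta n)) \<longlonglongrightarrow> b"
  \<comment> \<open>Condition 1 (ii)\<close>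
    and C1_psi: "\<And>K e. K \<ge> 0 \<Longrightarrow> e > 0 \<Longrightarrow>
        eventually (\<lambda>n. \<forall>z\<in>{0..K}. \<bar>psin (gam n) (q n) n z - psi z\<bar> < e) sequentially"
  \<comment> \<open>Condition 1 (iii)\<close>
    and C1_phi_lip: "\<And>K. K \<ge> 0 \<Longrightarrow> \<exists>L. \<forall>n\<ge>1. \<forall>z1\<in>{0..min K (real n)}. \<forall>z2\<in>{0..min K (real n)}.
        \<bar>phin (gam n) (p n) n z1 - phin (gam n) (p n) n z2\<bar> \<le> L * \<bar>z1 - z2\<bar>"
    and C1_phi_cont: "continuous_on {0..} phi"
    and C1_phi: "\<And>K e. K \<ge> 0 \<Longrightarrow> e > 0 \<Longrightarrow>
        eventually (\<lambda>n. \<forall>z\<in>{0..K}. \<bar>phin (gam n) (p n) n z - phi z\<bar> < e) sequentially"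
  \<comment> \<open>m := lim gam_n (1 - m_n), which exists under Condition 1\<close>
    and m_def: "(\<lambda>n. gam n * (1 - pmean (p n))) \<longlonglongrightarrow> m"
  \<comment> \<open>Condition 2 for some alpha in (1,2)\<close>
    and alpha: "1 < alpha" "alpha < 2"
    and C2_1a: "\<exists>C k0. C > 0 \<and> k0 > (0::nat) \<and> (\<forall>n\<ge>1.
        summable (\<lambda>k. if k \<ge> k0 then (real k / real n) powr alpha * pmf (p n) k else 0) \<and>
        summable (\<lambda>k. real k powr alpha * pmf (q n) k) \<and>
        real n * gam n * (\<Sum>k. if k \<ge> k0 then (real k / real n) powr alpha * pmf (p n) k else 0)
          + (\<Sum>k. real k powr alpha * pmf (q n) k) \<le> C)"
    and C2_1b: "(\<lambda>k1. limsup (\<lambda>n. ereal (gam n *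
        (\<Sum>k. if k \<ge> k1 then real k * pmf (p n) k else 0)))) \<longlonglongrightarrow> 0"
    and C2_2: "\<exists>C0 Lstar. C0 > 0 \<and> prob_on_Rplus Lstar \<and>
        integrable Lstar (\<lambda>t. t powr (2 * alpha)) \<and>
        (\<forall>n\<ge>1. \<forall>t\<ge>0. tail (Lam n) t \<le> C0 * tail Lstar t)"
  \<comment> \<open>beta\<close>
    and beta: "beta \<ge> 0" "beta > - (b + m) / (sig0 * lam0)"
  \<comment> \<open>R^(n) is the (unique) locally integrable solution of the renewal equation\<close>
    and R_sol: "\<And>n. n \<ge> 1 \<Longrightarrow> renewal_solution (lam n * pmean (p n)) (Lam n) (R n)"
  shows "\<exists>C>0. \<exists>n0\<ge>(1::nat). \<forall>k\<ge>1. \<forall>y::nat \<Rightarrow> real. (\<forall>j\<in>{1..k}. y j \<ge> 0) \<longrightarrow>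
           (\<forall>n\<ge>n0. \<forall>t\<ge>0. exp (- beta * t / gam n) * Rky (lam n) (R n) t k y
                        \<le> C * (\<Sum>j=1..k. 1 + y j))"
proof -
  obtain C0 Lstar where C0: "C0 > 0" and Lstar: "prob_on_Rplus Lstar"
    and Lstar_int: "integrable Lstar (\<lambda>t. t powr (2 * alpha))"
    and dom: "\<And>n t. n \<ge> 1 \<Longrightarrow> t \<ge> 0 \<Longrightarrow> tail (Lam n) t \<le> C0 * tail Lstar t"
    using C2_2 by blast
  define B where "B = C0 * (\<integral>y. 1 + y powr (2 * alpha) \<partial>Lstar)"
  have c_lim: "(\<lambda>n. lam n * pmean (p n)) \<longlonglongrightarrow> lam0"
    using tendsto_mult[OF C1_lam(1) tendsto_one_of_scaled_defect[OF gam_inf m_def]] by simp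
  have "0 < b + m + lam0 * beta * sig0"
    using beta(2) C1_sig(2) C1_lam(2) by (simp add: divide_less_eq algebra_simps)
  from eventually_discounted_mass_lt_1[OF gam_inf C1_b m_def C1_lam(1) C1_sig(1) alpha(1) beta(1) this]
  have "eventually (\<lambda>n. lam n * pmean (p n) * (eta n - beta / gam n * sig n + (beta / gam n) powr alpha * B) < 1)
      sequentially" .
  moreover have "eventually (\<lambda>n. lam n < 2 * lam0) sequentially"
    and "eventually (\<lambda>n. lam n * pmean (p n) < 2 * lam0) sequentially"
    using C1_lam c_lim by (auto intro: order_tendstoD(2))
  ultimately have "eventually (\<lambda>n. lam n * pmean (p n) * (eta n - beta / gam n * sig n + (beta / gam n) powr alpha * B) < 1
      \<and> lam n < 2 * lam0 \<and> lam n * pmean (p n) < 2 * lam0 \<and> n \<ge> 1) sequentially"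
    by (intro eventually_conj eventually_ge_at_top)
  then obtain N where N: "\<And>n. n \<ge> N \<Longrightarrow>
      lam n * pmean (p n) * (eta n - beta / gam n * sig n + (beta / gam n) powr alpha * B) < 1
      \<and> lam n < 2 * lam0 \<and> lam n * pmean (p n) < 2 * lam0 \<and> n \<ge> 1"
    by (auto simp: eventually_sequentially)
  show ?thesis
  proof (intro exI[of _ "2 * lam0 * (3 + 4 * (2 * lam0))"] conjI exI[of _ "max N 1"] allI impI)
    show "0 < 2 * lam0 * (3 + 4 * (2 * lam0))" using C1_lam(2) by simp
    show "1 \<le> max N 1" by simp
    fix k n :: nat and y :: "nat \<Rightarrow> real" and t :: real
    assume "1 \<le> k" and y: "\<forall>j\<in>{1..k}. 0 \<le> y j" and n: "max N 1 \<le> n" and t: "0 \<le> t"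
    have n1: "1 \<le> n" using n by simp
    note Nn = N[of n]
    have s: "0 \<le> beta / gam n" using beta(1) gam_pos[OF n1] by simp
    have c: "0 \<le> lam n * pmean (p n)"
      using lam_pos[OF n1] p_mean[OF n1] by (simp add: pmean_def suminf_nonneg)
    have "exp (- (beta / gam n) * t) * Rky (lam n) (R n) t k y
        \<le> 2 * lam0 * (3 + 4 * (2 * lam0)) * (\<Sum>j=1..k. 1 + y j)"
    proof (rule Rky_discounted_le_of_moments[OF lam_pos[OF n1] _ c _ Lam_prob[OF n1] Lam_mom1[OF n1]
          Lam_mom2[OF n1] Lstar less_imp_le[OF C0] dom[OF n1] Lstar_int less_imp_le[OF alpha(1)]
          less_imp_le[OF alpha(2)] s _ R_sol[OF n1] t y])
      show "lam n \<le> 2 * lam0" "lam n * pmean (p n) \<le> 2 * lam0" using Nn n by auto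
      show "lam n * pmean (p n) * ((\<integral>y. y \<partial>Lam n) - beta / gam n * ((1/2) * (\<integral>y. y^2 \<partial>Lam n))
          + (beta / gam n) powr alpha * (C0 * (\<integral>y. 1 + y powr (2 * alpha) \<partial>Lstar))) \<le> 1"
        using Nn n unfolding eta_def sig_def B_def by auto
    qed
    then show "exp (- beta * t / gam n) * Rky (lam n) (R n) t k y
        \<le> 2 * lam0 * (3 + 4 * (2 * lam0)) * (\<Sum>j=1..k. 1 + y j)"
      by simp
  qed
qed

end
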